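(* Let $A,B\in\mathrm{SL}_2\mathbb{Z}$ be noncommuting, well oriented, with $2\le\mathrm{tr}(A)<\mathrm{tr}(B)$. For every $n\ge1$, any word $w$ of length $n$ such that $[w]$ is maximal among the values $[u]$ for words $u$ of length $n$ does not contain the factor $a^2$.
   Context: Words are finite strings over $\{a,b\}$; a factor is a contiguous subword; $\phi$ is the homomorphism with $\phi(a)=A,\phi(b)=B$, and $[w]=\mathrm{tr}(\phi(w))$. Fixed points are for the Möbius action on $\partial\mathcal{H}=\mathbb{P}^1\mathbb{R}$; $\alpha^\pm$ ($\beta^\pm$) are the attracting/repelling fixed points of $A$ ($B$), both equal to the unique fixed point if parabolic. With $\partial\mathcal{H}$ cyclically ordered and $[\alpha,\beta]$ the closed counterclockwise interval from $\alpha$ to $\beta$, let $I^+=\{\alpha^+\}$ if $\alpha^+=\beta^+$, and otherwise the one of $[\alpha^+,\beta^+],[\beta^+,\alpha^+]$ mapped into itself by both $A$ and $B$ (if it exists); define $I^-$ likewise with $A^{-1},B^{-1},\alpha^-,\beta^-$. The pair is coherently oriented if both exist, and well oriented if $A,B$ is coherently oriented but $A,B^{-1}$ is not. *)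

theory Defs
  imports "HOL-Analysis.Analysis"
begin

type_synonym imat = "int^2^2"

definition SL2Z :: "imat set" where
  "SL2Z = {M. det M = 1}"

text \<open>Inverse of a matrix in SL(2,Z) (adjugate).\<close>
definition inv2 :: "imat \<Rightarrow> imat" where
  "inv2 M = (\<chi> i j. if i = j then M $ (if i = 1 then 2 else 1) $ (if i = 1 then 2 else 1)
                      else - M $ i $ j)"

datatype letter = La | Lb

fun phi :: "imat \<Rightarrow> imat \<Rightarrow> letter list \<Rightarrow> imat" where
  "phi A B [] = mat 1"
| "phi A B (La # w) = A ** phi A B w"
| "phi A B (Lb # w) = B ** phi A B w"

definition wtr :: "imat \<Rightarrow> imat \<Rightarrow> letter list \<Rightarrow> int" where
  "wtr A B w = trace (phi A B w)"

definition has_factor :: "letter list \<Rightarrow> letter list \<Rightarrow> bool" where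
  "has_factor f w \<longleftrightarrow> (\<exists>u v. w = u @ f @ v)"

text \<open>P^1(R) = R \<union> {\<infinity>}: Some x is the point [x:1], None is \<infinity> = [1:0].\<close>
type_synonym bpt = "real option"

definition rmat :: "imat \<Rightarrow> real^2^2" where
  "rmat M = (\<chi> i j. real_of_int (M $ i $ j))"

definition mob :: "imat \<Rightarrow> bpt \<Rightarrow> bpt" where
  "mob M z = (let p = real_of_int (M$1$1); q = real_of_int (M$1$2);
                  r = real_of_int (M$2$1); s = real_of_int (M$2$2) in
     (case z of
        Some x \<Rightarrow> (if r * x + s = 0 then None else Some ((p * x + q) / (r * x + s)))
      | None \<Rightarrow> (if r = 0 then None else Some (p / r))))"

definition proj :: "real^2 \<Rightarrow> bpt" where
  "proj v = (if v $ 2 \<noteq> 0 then Some (v $ 1 / v $ 2) else None)"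

text \<open>For a parabolic element both equal its unique fixed point.\<close>
definition is_attr_fix :: "imat \<Rightarrow> bpt \<Rightarrow> bool" where
  "is_attr_fix M z \<longleftrightarrow> (\<exists>v l. v \<noteq> 0 \<and> rmat M *v v = l *\<^sub>R v \<and> proj v = z \<and>
      (\<forall>w m. w \<noteq> 0 \<and> rmat M *v w = m *\<^sub>R w \<longrightarrow> \<bar>m\<bar> \<le> \<bar>l\<bar>))"

definition is_rep_fix :: "imat \<Rightarrow> bpt \<Rightarrow> bool" where
  "is_rep_fix M z \<longleftrightarrow> (\<exists>v l. v \<noteq> 0 \<and> rmat M *v v = l *\<^sub>R v \<and> proj v = z \<and>
      (\<forall>w m. w \<noteq> 0 \<and> rmat M *v w = m *\<^sub>R w \<longrightarrow> \<bar>l\<bar> \<le> \<bar>m\<bar>))"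

definition attr_fix :: "imat \<Rightarrow> bpt" where
  "attr_fix M = (THE z. is_attr_fix M z)"

definition rep_fix :: "imat \<Rightarrow> bpt" where
  "rep_fix M = (THE z. is_rep_fix M z)"

text \<open>Closed counterclockwise interval [x,y] of P^1(R), oriented as the boundary of
  the upper half plane (increasing along R, then through \<infinity>).\<close>
fun cint :: "bpt \<Rightarrow> bpt \<Rightarrow> bpt set" where
  "cint (Some x) (Some y) =
     (if x \<le> y then Some ` {x..y} else Some ` {x..} \<union> {None} \<union> Some ` {..y})"
| "cint (Some x) None = Some ` {x..} \<union> {None}"
| "cint None (Some y) = {None} \<union> Some ` {..y}"
| "cint None None = {None}"

definition I_exists :: "imat \<Rightarrow> imat \<Rightarrow> bpt \<Rightarrow> bpt \<Rightarrow> bool" where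
  "I_exists M N x y \<longleftrightarrow> x = y \<or>
     (\<exists>J \<in> {cint x y, cint y x}. mob M ` J \<subseteq> J \<and> mob N ` J \<subseteq> J)"

definition coherently_oriented :: "imat \<Rightarrow> imat \<Rightarrow> bool" where
  "coherently_oriented A B \<longleftrightarrow>
     I_exists A B (attr_fix A) (attr_fix B) \<and>
     I_exists (inv2 A) (inv2 B) (rep_fix A) (rep_fix B)"

definition well_oriented :: "imat \<Rightarrow> imat \<Rightarrow> bool" where
  "well_oriented A B \<longleftrightarrow> coherently_oriented A B \<and> \<not> coherently_oriented A (inv2 B)"

end

theory Submission
  imports Defs
begin

(* Let u be the attracting eigenvector of A (eigenvalue lam >= 1) and v the attracting
   eigenvector of B (eigenvalue mu > 1); in the basis u, v
     A = [[lam, a], [0, 1/lam]],   B = [[1/mu, 0], [b, mu]].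
   The pair A, B^-1 is not coherently oriented, so some interval between two attracting (or two
   repelling) fixed points is not invariant under both maps. Reading this off the signs of the
   quadratic forms w /\ Mw at the fixed points gives ab > (lam - 1/lam)(mu - 1/mu) >= 0, and after
   replacing v by -v we may take a, b >= 0. Then every word X in A, B has nonnegative entries in
   this basis, with positive diagonal, and tr(ABX) - tr(AAX) is a combination of the entries of X
   with nonnegative coefficients and a positive coefficient at X22; tr B >= tr A + 1 is what makes
   the coefficients nonnegative. So if a cyclic rotation of w begins with aa, replacing it by ab
   strictly increases the trace. *)

section \<open>Cyclic order and the Moebius action\<close>

definition wedge :: "real \<times> real \<Rightarrow> real \<times> real \<Rightarrow> real" where
  "wedge a b = fst a * snd b - snd a * fst b"

definition act :: "imat \<Rightarrow> real \<times> real \<Rightarrow> real \<times> real" where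
  "act M w = (real_of_int (M$1$1) * fst w + real_of_int (M$1$2) * snd w,
              real_of_int (M$2$1) * fst w + real_of_int (M$2$2) * snd w)"

definition qform :: "imat \<Rightarrow> real \<times> real \<Rightarrow> real" where
  "qform M w = wedge w (act M w)"

fun hcoords :: "bpt \<Rightarrow> real \<times> real" where
  "hcoords (Some x) = (x, 1)"
| "hcoords None = (1, 0)"

text \<open>The sign of \<open>ccw p q r\<close> does not change when the homogeneous coordinates are
  rescaled, since each of them occurs twice; it is positive iff \<open>p, q, r\<close> are distinct and
  in counterclockwise order.\<close>
definition ccw :: "bpt \<Rightarrow> bpt \<Rightarrow> bpt \<Rightarrow> real" where
  "ccw p q r = wedge (hcoords p) (hcoords q) * wedge (hcoords q) (hcoords r) *
     wedge (hcoords r) (hcoords p)"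

lemma SL2Z_det_real:
  "M \<in> SL2Z \<Longrightarrow>
     real_of_int (M$1$1) * real_of_int (M$2$2) - real_of_int (M$1$2) * real_of_int (M$2$1) = 1"
proof -
  assume "M \<in> SL2Z"
  then have "real_of_int (M$1$1 * M$2$2 - M$1$2 * M$2$1) = 1" by (simp add: SL2Z_def det_2)
  then show ?thesis by simp
qed

lemma wedge_act:
  assumes "M \<in> SL2Z"
  shows "wedge (act M a) (act M b) = wedge a b"
proof -
  have "wedge (act M a) (act M b) = (real_of_int (M$1$1) * real_of_int (M$2$2) -
      real_of_int (M$1$2) * real_of_int (M$2$1)) * wedge a b"
    by (simp add: wedge_def act_def algebra_simps)
  then show ?thesis using SL2Z_det_real[OF assms] by simp
qed

lemma wedge_scaleR_left: "wedge (k *\<^sub>R a) b = k * wedge a b"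
  and wedge_scaleR_right: "wedge a (k *\<^sub>R b) = k * wedge a b"
  by (simp_all add: wedge_def algebra_simps)

lemma wedge_commute: "wedge a b = - wedge b a"
  by (simp add: wedge_def)

lemma wedge_uminus: "wedge (- a) b = - wedge a b" "wedge a (- b) = - wedge a b"
  by (simp_all add: wedge_def)

lemma wedge_self [simp]: "wedge a a = 0"
  by (simp add: wedge_def)

lemma wedge_hcoords_eq_0_iff: "wedge (hcoords p) (hcoords q) = 0 \<longleftrightarrow> p = q"
  by (cases p; cases q) (simp_all add: wedge_def)

lemma hcoords_nonzero: "hcoords p \<noteq> 0"
  by (cases p) (simp_all add: zero_prod_def)

lemma act_scaleR: "act M (k *\<^sub>R w) = k *\<^sub>R act M w"
  by (simp add: act_def algebra_simps)

lemma act_uminus: "act M (- w) = - act M w"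
  by (simp add: act_def)

lemma act_mult: "act (M ** N) w = act M (act N w)"
  by (simp add: act_def matrix_matrix_mult_def sum_2 algebra_simps)

lemma act_id: "act (mat 1) w = w"
  by (simp add: act_def mat_def)

lemma qform_eigenvector: "act M w = l *\<^sub>R w \<Longrightarrow> qform M w = 0"
  by (simp add: qform_def wedge_scaleR_right)

lemma qform_eq_0_if_parallel_eigenvector:
  assumes "wedge u v = 0" "v \<noteq> 0" "act M v = l *\<^sub>R v"
  shows "qform M u = 0"
proof -
  obtain k where "u = k *\<^sub>R v"
  proof (cases "fst v = 0")
    case True
    with assms(2) have "snd v \<noteq> 0" by (auto simp: zero_prod_def prod_eq_iff)
    with True assms(1) show ?thesis
      by (intro that[of "snd u / snd v"]) (auto simp: wedge_def prod_eq_iff)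
  next
    case False
    with assms(1) show ?thesis
      by (intro that[of "fst u / fst v"]) (auto simp: wedge_def prod_eq_iff field_simps)
  qed
  then show ?thesis
    using qform_eigenvector[OF assms(3)]
    by (simp add: qform_def act_scaleR wedge_scaleR_left wedge_scaleR_right)
qed

lemma wedge_ne_0_if_qform_ne_0:
  assumes "act M u = l *\<^sub>R u" "act N v = m *\<^sub>R v" "u \<noteq> 0" "v \<noteq> 0"
    and "qform N u \<noteq> 0 \<or> qform M v \<noteq> 0"
  shows "wedge u v \<noteq> 0"
proof
  assume uv: "wedge u v = 0"
  then have "wedge v u = 0" using wedge_commute[of v u] by simp
  then show False using assms qform_eq_0_if_parallel_eigenvector uv by metis
qed

lemma real_cyclic_order_iff:
  fixes a b c :: real
  assumes "a \<noteq> b"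
  shows "(a - c) * (c - b) * (b - a) > 0 \<longleftrightarrow> (if a \<le> b then a < c \<and> c < b else a < c \<or> c < b)"
  using assms by (cases "a < b") (auto simp: zero_less_mult_iff mult_less_0_iff)

lemma cint_iff_ccw:
  assumes "x \<noteq> y"
  shows "q \<in> cint x y \<longleftrightarrow> q = x \<or> q = y \<or> ccw x q y > 0"
proof (cases x; cases y; cases q)
  fix a b c assume "x = Some a" "y = Some b" "q = Some c"
  moreover have "ccw x q y = (a - c) * (c - b) * (b - a)"
    using calculation by (simp add: ccw_def wedge_def)
  ultimately show ?thesis
    using assms real_cyclic_order_iff[of a b c] by (auto split: if_splits)
qed (use assms in \<open>auto simp: ccw_def wedge_def\<close>)

lemma hcoords_mob:
  assumes "M \<in> SL2Z"
  obtains k where "k \<noteq> 0" "hcoords (mob M z) = k *\<^sub>R act M (hcoords z)"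
proof -
  define p q r s where "p = real_of_int (M$1$1)" "q = real_of_int (M$1$2)"
    "r = real_of_int (M$2$1)" "s = real_of_int (M$2$2)"
  have det: "p * s - q * r = 1" using SL2Z_det_real[OF assms] by (simp add: p_q_r_s_def)
  have mob: "mob M w = (case w of
        Some x \<Rightarrow> (if r * x + s = 0 then None else Some ((p * x + q) / (r * x + s)))
      | None \<Rightarrow> (if r = 0 then None else Some (p / r)))" for w
    unfolding p_q_r_s_def mob_def Let_def by (rule refl)
  have act: "act M w = (p * fst w + q * snd w, r * fst w + s * snd w)" for w
    by (simp add: act_def p_q_r_s_def)
  show ?thesis
  proof (cases z)
    case None
    show ?thesis
    proof (cases "r = 0")
      case True
      then have "p \<noteq> 0" using det by auto
      then show ?thesis using None True by (intro that[of "1/p"]) (simp_all add: mob act)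
    next
      case False
      then show ?thesis using None by (intro that[of "1/r"]) (simp_all add: mob act)
    qed
  next
    case (Some x)
    show ?thesis
    proof (cases "r * x + s = 0")
      case True
      have "p * (r * x + s) - r * (p * x + q) = 1" using det by (simp add: algebra_simps)
      then have "p * x + q \<noteq> 0" using True by auto
      then show ?thesis using Some True by (intro that[of "1/(p*x+q)"]) (simp_all add: mob act)
    next
      case False
      then show ?thesis using Some by (intro that[of "1/(r*x+s)"]) (simp_all add: mob act)
    qed
  qed
qed

lemma ccw_mob_pos_iff:
  assumes "M \<in> SL2Z"
  shows "ccw (mob M a) (mob M b) (mob M c) > 0 \<longleftrightarrow> ccw a b c > 0"
proof -
  obtain ka kb kc where k: "ka \<noteq> 0" "kb \<noteq> 0" "kc \<noteq> 0"
    and "hcoords (mob M a) = ka *\<^sub>R act M (hcoords a)"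
        "hcoords (mob M b) = kb *\<^sub>R act M (hcoords b)"
        "hcoords (mob M c) = kc *\<^sub>R act M (hcoords c)"
    using hcoords_mob[OF assms] by metis
  then have "ccw (mob M a) (mob M b) (mob M c) = (ka * kb * kc)^2 * ccw a b c"
    unfolding ccw_def by (simp add: wedge_scaleR_left wedge_scaleR_right wedge_act[OF assms]
        power2_eq_square algebra_simps)
  moreover have "(ka * kb * kc)^2 > 0" using k by simp
  ultimately show ?thesis by (simp add: zero_less_mult_iff)
qed

lemma ccw_rotate: "ccw a b c = ccw b c a"
  by (simp add: ccw_def algebra_simps)

lemma ccw_trans:
  assumes "ccw a b c > 0" "ccw a c d > 0"
  shows "ccw a b d > 0"
proof -
  define w where "w x y = wedge (hcoords x) (hcoords y)" for x y
  have "ccw a b d * (w a c)^2 = (w a b)^2 * ccw a c d + (w d a)^2 * ccw a b c"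
    by (simp add: ccw_def w_def wedge_def power2_eq_square algebra_simps)
  moreover have "w a b \<noteq> 0" using assms(1) by (auto simp: ccw_def w_def)
  ultimately have "ccw a b d * (w a c)^2 > 0"
    using assms by (simp add: add_pos_nonneg)
  then show ?thesis by (simp add: zero_less_mult_iff)
qed

lemma mob_fixed_if_qform_0:
  assumes "M \<in> SL2Z" "qform M (hcoords x) = 0"
  shows "mob M x = x"
proof -
  obtain k where "hcoords (mob M x) = k *\<^sub>R act M (hcoords x)"
    using hcoords_mob[OF assms(1)] by metis
  then have "wedge (hcoords x) (hcoords (mob M x)) = 0"
    using assms(2) by (simp add: qform_def wedge_scaleR_right)
  then show ?thesis by (simp add: wedge_hcoords_eq_0_iff)
qed

lemma ccw_fixed_mob_pos_iff:
  assumes M: "M \<in> SL2Z" and eig: "act M (hcoords x) = l *\<^sub>R hcoords x" and "l > 0"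
  shows "ccw x (mob M y) y > 0 \<longleftrightarrow> x \<noteq> y \<and> qform M (hcoords y) > 0"
proof -
  obtain k where k: "k \<noteq> 0" "hcoords (mob M y) = k *\<^sub>R act M (hcoords y)"
    using hcoords_mob[OF M] by metis
  have "wedge (hcoords x) (act M (hcoords y)) =
      wedge (act M ((1/l) *\<^sub>R hcoords x)) (act M (hcoords y))"
    using \<open>l > 0\<close> by (simp add: act_scaleR eig)
  also have "\<dots> = (1/l) * wedge (hcoords x) (hcoords y)"
    by (simp add: wedge_act[OF M] wedge_scaleR_left)
  moreover define c where "c = k^2 / l"
  ultimately have
    "ccw x (mob M y) y = c * ((wedge (hcoords x) (hcoords y))^2 * qform M (hcoords y))"
    unfolding ccw_def qform_def k(2) wedge_scaleR_left wedge_scaleR_right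
    by (simp add: wedge_commute[of "act M (hcoords y)"] wedge_commute[of "hcoords y" "hcoords x"]
        power2_eq_square)
  moreover have "c > 0" using k \<open>l > 0\<close> by (simp add: c_def)
  ultimately show ?thesis
    using wedge_hcoords_eq_0_iff[of x y] by (simp add: zero_less_mult_iff)
qed

lemma ccw_mob_fixed_pos_iff:
  assumes M: "M \<in> SL2Z" and eig: "act M (hcoords y) = l *\<^sub>R hcoords y" and "l > 0"
  shows "ccw x (mob M x) y > 0 \<longleftrightarrow> x \<noteq> y \<and> qform M (hcoords x) < 0"
proof -
  obtain k where k: "k \<noteq> 0" "hcoords (mob M x) = k *\<^sub>R act M (hcoords x)"
    using hcoords_mob[OF M] by metis
  have "wedge (act M (hcoords x)) (hcoords y) =
      wedge (act M (hcoords x)) (act M ((1/l) *\<^sub>R hcoords y))"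
    using \<open>l > 0\<close> by (simp add: act_scaleR eig)
  also have "\<dots> = (1/l) * wedge (hcoords x) (hcoords y)"
    by (simp add: wedge_act[OF M] wedge_scaleR_right)
  moreover define c where "c = k^2 / l"
  ultimately have
    "ccw x (mob M x) y = c * ((wedge (hcoords x) (hcoords y))^2 * - qform M (hcoords x))"
    unfolding ccw_def qform_def k(2) wedge_scaleR_left wedge_scaleR_right
    by (simp add: wedge_commute[of "hcoords y" "hcoords x"] power2_eq_square)
  moreover have "c > 0" using k \<open>l > 0\<close> by (simp add: c_def)
  ultimately show ?thesis
    using wedge_hcoords_eq_0_iff[of x y] by (auto simp: zero_less_mult_iff mult_less_0_iff)
qed

text \<open>The endpoint \<open>x\<close> is fixed and \<open>y\<close> moves into \<open>cint x y\<close>; since \<open>mob M\<close> preserves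
  the cyclic order, the whole interval is mapped into itself.\<close>
lemma mob_cint_subset_fixed_left:
  assumes M: "M \<in> SL2Z" and eig: "act M (hcoords x) = l *\<^sub>R hcoords x" and "l > 0"
    and xy: "x \<noteq> y" and Q: "qform M (hcoords y) \<ge> 0"
  shows "mob M ` cint x y \<subseteq> cint x y"
proof
  fix z assume "z \<in> mob M ` cint x y"
  then obtain q where q: "q \<in> cint x y" and z: "z = mob M q" by blast
  have Mx: "mob M x = x"
    using mob_fixed_if_qform_0[OF M] qform_eigenvector[OF eig] by blast
  have My: "mob M y = y \<or> ccw x (mob M y) y > 0"
    using mob_fixed_if_qform_0[OF M] ccw_fixed_mob_pos_iff[OF M eig \<open>l > 0\<close>] xy Q
    by (cases "qform M (hcoords y) = 0") auto
  from q consider "q = x" | "q = y" | "ccw x q y > 0" using cint_iff_ccw[OF xy] by blast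
  then show "z \<in> cint x y"
  proof cases
    case 3
    then have "ccw x (mob M q) (mob M y) > 0" using ccw_mob_pos_iff[OF M, of x q y] Mx by simp
    then have "ccw x (mob M q) y > 0" using My ccw_trans by metis
    then show ?thesis using z cint_iff_ccw[OF xy] by simp
  qed (use z Mx My cint_iff_ccw[OF xy] in auto)
qed

lemma mob_cint_subset_fixed_right:
  assumes M: "M \<in> SL2Z" and eig: "act M (hcoords y) = l *\<^sub>R hcoords y" and "l > 0"
    and xy: "x \<noteq> y" and Q: "qform M (hcoords x) \<le> 0"
  shows "mob M ` cint x y \<subseteq> cint x y"
proof
  fix z assume "z \<in> mob M ` cint x y"
  then obtain q where q: "q \<in> cint x y" and z: "z = mob M q" by blast
  have My: "mob M y = y"
    using mob_fixed_if_qform_0[OF M] qform_eigenvector[OF eig] by blast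
  have Mx: "mob M x = x \<or> ccw x (mob M x) y > 0"
    using mob_fixed_if_qform_0[OF M] ccw_mob_fixed_pos_iff[OF M eig \<open>l > 0\<close>] xy Q
    by (cases "qform M (hcoords x) = 0") auto
  from q consider "q = x" | "q = y" | "ccw x q y > 0" using cint_iff_ccw[OF xy] by blast
  then show "z \<in> cint x y"
  proof cases
    case 3
    then have "ccw (mob M x) (mob M q) y > 0" using ccw_mob_pos_iff[OF M, of x q y] My by simp
    then have "ccw y (mob M x) (mob M q) > 0" using ccw_rotate by metis
    then have "ccw y x (mob M q) > 0" using Mx ccw_trans ccw_rotate by metis
    then have "ccw x (mob M q) y > 0" using ccw_rotate by metis
    then show ?thesis using z cint_iff_ccw[OF xy] by simp
  qed (use z Mx My cint_iff_ccw[OF xy] in auto)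
qed

lemma I_exists_if_qform_nonpos:
  assumes M: "M \<in> SL2Z" and N: "N \<in> SL2Z"
    and eig_M: "act M (hcoords x) = l *\<^sub>R hcoords x" and "l > 0"
    and eig_N: "act N (hcoords y) = m *\<^sub>R hcoords y" and "m > 0"
    and Q: "qform M (hcoords y) * qform N (hcoords x) \<le> 0"
  shows "I_exists M N x y"
proof (cases "x = y")
  case False
  note left = mob_cint_subset_fixed_left and right = mob_cint_subset_fixed_right
  from Q consider "qform M (hcoords y) \<ge> 0 \<and> qform N (hcoords x) \<le> 0"
    | "qform M (hcoords y) \<le> 0 \<and> qform N (hcoords x) \<ge> 0"
    by (auto simp: mult_le_0_iff)
  then show ?thesis
  proof cases
    case 1
    then show ?thesis
      using left[OF M eig_M \<open>l > 0\<close> False] right[OF N eig_N \<open>m > 0\<close> False]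
      unfolding I_exists_def by blast
  next
    case 2
    then show ?thesis
      using right[OF M eig_M \<open>l > 0\<close>, of y] left[OF N eig_N \<open>m > 0\<close>, of x] False
      unfolding I_exists_def by blast
  qed
qed (simp add: I_exists_def)

section \<open>Fixed points of elements of trace at least 2\<close>

lemma real_eigenvector_iff:
  "rmat M *v v = l *\<^sub>R v \<longleftrightarrow>
     real_of_int (M$1$1) * v$1 + real_of_int (M$1$2) * v$2 = l * v$1 \<and>
     real_of_int (M$2$1) * v$1 + real_of_int (M$2$2) * v$2 = l * v$2"
  by (simp add: vec_eq_iff forall_2 matrix_vector_mult_def sum_2 rmat_def)

lemma vec2_nonzero_iff: "(v::real^2) \<noteq> 0 \<longleftrightarrow> v$1 \<noteq> 0 \<or> v$2 \<noteq> 0"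
  by (auto simp: vec_eq_iff forall_2)

locale sl2z_trace_ge_2 =
  fixes M :: imat
  assumes SL: "M \<in> SL2Z" and trace_ge_2: "trace M \<ge> 2" and not_id: "M \<noteq> mat 1"
begin

definition "p = real_of_int (M$1$1)"
definition "q = real_of_int (M$1$2)"
definition "r = real_of_int (M$2$1)"
definition "s = real_of_int (M$2$2)"
definition "T = real_of_int (trace M)"
definition "lam = (T + sqrt (T^2 - 4)) / 2"
definition "lam' = (T - sqrt (T^2 - 4)) / 2"

text \<open>The fixed point of \<open>mob M\<close> belonging to the eigenvalue \<open>l\<close>; when \<open>r = 0\<close> the
  hypotheses force \<open>M\<close> to be a parabolic upper triangular matrix fixing \<open>\<infinity>\<close>.\<close>
definition "eigpt l = (if r \<noteq> 0 then Some ((l - s) / r) else None)"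

lemma det: "p * s - q * r = 1"
  using SL2Z_det_real[OF SL] by (simp add: p_def q_def r_def s_def)

lemma T_eq: "T = p + s"
  by (simp add: T_def p_def s_def trace_def sum_2)

lemma discriminant_nonneg: "T^2 \<ge> 4"
proof -
  have "T \<ge> 2" using trace_ge_2 by (simp add: T_def)
  then have "T^2 \<ge> 2^2" by (intro power_mono) auto
  then show ?thesis by simp
qed

lemma lam_mult_lam': "lam * lam' = 1"
  using discriminant_nonneg by (simp add: lam_def lam'_def field_simps power2_eq_square)

lemma lam_add_lam': "lam + lam' = T"
  by (simp add: lam_def lam'_def field_simps)

lemma lam_ge_1: "lam \<ge> 1"
proof -
  have "T \<ge> 2" using trace_ge_2 by (simp add: T_def)
  moreover have "sqrt (T^2 - 4) \<ge> 0" using discriminant_nonneg by simp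
  ultimately have "T + sqrt (T^2 - 4) \<ge> 2" by linarith
  then show ?thesis unfolding lam_def by simp
qed

lemma lam'_eq: "lam' = 1 / lam"
  using lam_mult_lam' lam_ge_1 by (simp add: field_simps)

lemma lam'_pos: "lam' > 0" and lam'_le_lam: "lam' \<le> lam"
  using lam_ge_1 by (simp_all add: lam'_eq order.trans[of _ 1])

lemma char_poly_root_iff: "l^2 - T * l + 1 = 0 \<longleftrightarrow> l = lam \<or> l = lam'"
proof -
  have "l^2 - T * l + 1 = (l - lam) * (l - lam')"
    using lam_mult_lam' lam_add_lam'
    by (simp add: algebra_simps power2_eq_square) (metis distrib_left)
  then show ?thesis by simp
qed

lemma eigenvalue_cases:
  assumes "(v::real^2) \<noteq> 0" "rmat M *v v = l *\<^sub>R v"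
  shows "l = lam \<or> l = lam'"
proof -
  have e1: "p * v$1 + q * v$2 = l * v$1" and e2: "r * v$1 + s * v$2 = l * v$2"
    using assms(2) by (simp_all add: real_eigenvector_iff p_def q_def r_def s_def)
  have "v$1 * ((p - l) * (s - l) - q * r) =
      (s - l) * (p * v$1 + q * v$2 - l * v$1) - q * (r * v$1 + s * v$2 - l * v$2)"
   and "v$2 * ((p - l) * (s - l) - q * r) =
      (p - l) * (r * v$1 + s * v$2 - l * v$2) - r * (p * v$1 + q * v$2 - l * v$1)"
    by (simp_all add: algebra_simps)
  then have "(p - l) * (s - l) - q * r = 0" using e1 e2 assms(1) vec2_nonzero_iff by auto
  then have "l^2 - T * l + 1 = 0" using det T_eq by (simp add: algebra_simps power2_eq_square)
  then show ?thesis using char_poly_root_iff by simp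
qed

lemma parabolic_if_r_eq_0: "r = 0 \<Longrightarrow> p = 1 \<and> s = 1 \<and> q \<noteq> 0 \<and> lam = 1 \<and> lam' = 1"
proof -
  assume "r = 0"
  then have r: "M$2$1 = 0" by (simp add: r_def)
  have "M$1$1 * M$2$2 = 1" using SL r by (simp add: SL2Z_def det_2)
  moreover have "M$1$1 + M$2$2 \<ge> 2" using trace_ge_2 by (simp add: trace_def sum_2)
  ultimately have d: "M$1$1 = 1" "M$2$2 = 1" using zmult_eq_1_iff by auto
  moreover have "M$1$2 \<noteq> 0"
    using not_id d r by (auto simp: vec_eq_iff forall_2 mat_def)
  moreover have "T = 2" using d by (simp add: T_def trace_def sum_2)
  ultimately show ?thesis by (simp add: p_def s_def q_def lam_def lam'_def)
qed

lemma act_eigpt: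
  assumes "l = lam \<or> l = lam'"
  shows "act M (hcoords (eigpt l)) = l *\<^sub>R hcoords (eigpt l)"
proof (cases "r = 0")
  case True
  then show ?thesis using parabolic_if_r_eq_0 assms
    by (simp add: eigpt_def act_def p_def[symmetric] q_def[symmetric] r_def[symmetric]
        s_def[symmetric])
next
  case False
  have "l^2 - T * l + 1 = 0" using char_poly_root_iff assms by simp
  then have "p * ((l - s) / r) + q = l * ((l - s) / r)"
    using False det T_eq by (simp add: field_simps power2_eq_square)
  then show ?thesis using False
    by (simp add: eigpt_def act_def p_def[symmetric] q_def[symmetric] r_def[symmetric]
        s_def[symmetric])
qed

lemma eigpt_eigenvector:
  assumes "l = lam \<or> l = lam'"
  obtains v where "v \<noteq> 0" "rmat M *v v = l *\<^sub>R v" "proj v = eigpt l"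
proof -
  obtain a b where ab: "hcoords (eigpt l) = (a, b)" by fastforce
  have "act M (a, b) = l *\<^sub>R (a, b)" using act_eigpt[OF assms] ab by simp
  then have "rmat M *v vector [a, b] = l *\<^sub>R vector [a, b]"
    by (simp add: real_eigenvector_iff act_def)
  moreover have "vector [a, b] \<noteq> (0::real^2)"
    using ab hcoords_nonzero[of "eigpt l"] by (auto simp: vec2_nonzero_iff zero_prod_def)
  moreover have "proj (vector [a, b]) = eigpt l"
    using ab by (cases "eigpt l") (auto simp: proj_def)
  ultimately show ?thesis using that by blast
qed

lemma proj_eigenvector:
  assumes "(v::real^2) \<noteq> 0" "rmat M *v v = l *\<^sub>R v" "l = lam \<or> l = lam'"
  shows "proj v = eigpt l"
proof -
  have e1: "p * v$1 + q * v$2 = l * v$1" and e2: "r * v$1 + s * v$2 = l * v$2"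
    using assms(2) by (simp_all add: real_eigenvector_iff p_def q_def r_def s_def)
  show ?thesis
  proof (cases "r = 0")
    case True
    then have "v$2 = 0" using parabolic_if_r_eq_0 assms(3) e1 by auto
    then show ?thesis using True by (simp add: proj_def eigpt_def)
  next
    case False
    then have "v$1 = (l - s) * v$2 / r" using e2 by (simp add: field_simps)
    moreover have "v$2 \<noteq> 0" using calculation assms(1) vec2_nonzero_iff by auto
    ultimately show ?thesis using False by (simp add: proj_def eigpt_def)
  qed
qed

lemma abs_eigenvalue_bounds:
  assumes "w \<noteq> 0" "rmat M *v w = m *\<^sub>R w"
  shows "\<bar>lam'\<bar> \<le> \<bar>m\<bar>" "\<bar>m\<bar> \<le> \<bar>lam\<bar>"
  using eigenvalue_cases[OF assms] lam'_pos lam'_le_lam by auto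

lemma attr_fix_eq: "attr_fix M = eigpt lam"
  unfolding attr_fix_def
proof (rule the_equality)
  obtain v where "v \<noteq> 0" "rmat M *v v = lam *\<^sub>R v" "proj v = eigpt lam"
    using eigpt_eigenvector by blast
  then show "is_attr_fix M (eigpt lam)"
    unfolding is_attr_fix_def using abs_eigenvalue_bounds(2) by blast
next
  fix z assume "is_attr_fix M z"
  then obtain v l where v: "v \<noteq> 0" "rmat M *v v = l *\<^sub>R v" "proj v = z"
    and max: "\<forall>w m. w \<noteq> 0 \<and> rmat M *v w = m *\<^sub>R w \<longrightarrow> \<bar>m\<bar> \<le> \<bar>l\<bar>"
    unfolding is_attr_fix_def by blast
  obtain w where "w \<noteq> 0" "rmat M *v w = lam *\<^sub>R w" using eigpt_eigenvector by blast
  then have "\<bar>lam\<bar> \<le> \<bar>l\<bar>" using max by blast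
  then have "l = lam" using eigenvalue_cases[OF v(1,2)] lam'_pos lam'_le_lam by auto
  then show "z = eigpt lam" using proj_eigenvector v by auto
qed

lemma rep_fix_eq: "rep_fix M = eigpt lam'"
  unfolding rep_fix_def
proof (rule the_equality)
  obtain v where "v \<noteq> 0" "rmat M *v v = lam' *\<^sub>R v" "proj v = eigpt lam'"
    using eigpt_eigenvector by blast
  then show "is_rep_fix M (eigpt lam')"
    unfolding is_rep_fix_def using abs_eigenvalue_bounds(1) by blast
next
  fix z assume "is_rep_fix M z"
  then obtain v l where v: "v \<noteq> 0" "rmat M *v v = l *\<^sub>R v" "proj v = z"
    and min: "\<forall>w m. w \<noteq> 0 \<and> rmat M *v w = m *\<^sub>R w \<longrightarrow> \<bar>l\<bar> \<le> \<bar>m\<bar>"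
    unfolding is_rep_fix_def by blast
  obtain w where "w \<noteq> 0" "rmat M *v w = lam' *\<^sub>R w" using eigpt_eigenvector by blast
  then have "\<bar>l\<bar> \<le> \<bar>lam'\<bar>" using min by blast
  then have "l = lam'" using eigenvalue_cases[OF v(1,2)] lam'_pos lam'_le_lam by auto
  then show "z = eigpt lam'" using proj_eigenvector v by auto
qed

lemma act_attr_fix: "act M (hcoords (attr_fix M)) = lam *\<^sub>R hcoords (attr_fix M)"
  using attr_fix_eq act_eigpt by simp

lemma act_rep_fix: "act M (hcoords (rep_fix M)) = (1 / lam) *\<^sub>R hcoords (rep_fix M)"
  using rep_fix_eq act_eigpt lam'_eq by simp

lemma trace_eq_lam: "real_of_int (trace M) = lam + 1 / lam"
  using lam_add_lam' lam'_eq by (simp add: T_def)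

end

lemma inv2_nth [simp]:
  "inv2 M $ 1 $ 1 = M $ 2 $ 2" "inv2 M $ 1 $ 2 = - M $ 1 $ 2"
  "inv2 M $ 2 $ 1 = - M $ 2 $ 1" "inv2 M $ 2 $ 2 = M $ 1 $ 1"
  by (simp_all add: inv2_def)

lemma inv2_SL2Z: "M \<in> SL2Z \<Longrightarrow> inv2 M \<in> SL2Z"
  by (simp add: SL2Z_def det_2 algebra_simps)

lemma inv2_inv2 [simp]: "inv2 (inv2 M) = M"
  by (simp add: vec_eq_iff forall_2)

lemma trace_inv2 [simp]: "trace (inv2 M) = trace M"
  by (simp add: trace_def sum_2)

lemma qform_inv2: "qform (inv2 M) w = - qform M w"
  by (simp add: qform_def wedge_def act_def algebra_simps)

lemma act_inv2_eigenvector: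
  assumes "M \<in> SL2Z" "act M w = l *\<^sub>R w" "l \<noteq> 0"
  shows "act (inv2 M) w = (1 / l) *\<^sub>R w"
proof -
  have "act (inv2 M) (act M w) = w"
    using SL2Z_det_real[OF assms(1)] by (simp add: act_def prod_eq_iff algebra_simps)
  then have "l *\<^sub>R act (inv2 M) w = w" by (simp add: assms(2) act_scaleR)
  then show ?thesis using assms(3) by (metis scaleR_scaleR divide_inverse_commute
        divide_self_if mult.commute scaleR_one)
qed

lemma sl2z_trace_ge_2_inv2:
  assumes "sl2z_trace_ge_2 M"
  shows "sl2z_trace_ge_2 (inv2 M)"
proof -
  interpret sl2z_trace_ge_2 M by fact
  have "inv2 (mat 1) = (mat 1 :: imat)" by (simp add: vec_eq_iff forall_2 mat_def)
  then have "inv2 M \<noteq> mat 1" using not_id by (metis inv2_inv2)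
  then show ?thesis using SL trace_ge_2 inv2_SL2Z by unfold_locales auto
qed

lemma not_coherently_oriented_qform:
  assumes "sl2z_trace_ge_2 M" "sl2z_trace_ge_2 N" "\<not> coherently_oriented M N"
  shows "qform M (hcoords (attr_fix N)) * qform N (hcoords (attr_fix M)) > 0 \<or>
         qform M (hcoords (rep_fix N)) * qform N (hcoords (rep_fix M)) > 0"
proof -
  interpret M: sl2z_trace_ge_2 M by fact
  interpret N: sl2z_trace_ge_2 N by fact
  have pos: "M.lam > 0" "N.lam > 0" using M.lam_ge_1 N.lam_ge_1 by auto
  have "act (inv2 M) (hcoords (rep_fix M)) = M.lam *\<^sub>R hcoords (rep_fix M)"
    using act_inv2_eigenvector[OF M.SL M.act_rep_fix] pos by simp
  moreover have "act (inv2 N) (hcoords (rep_fix N)) = N.lam *\<^sub>R hcoords (rep_fix N)"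
    using act_inv2_eigenvector[OF N.SL N.act_rep_fix] pos by simp
  ultimately show ?thesis
    using assms(3) pos M.SL N.SL
      I_exists_if_qform_nonpos[OF M.SL N.SL M.act_attr_fix _ N.act_attr_fix]
      I_exists_if_qform_nonpos[OF inv2_SL2Z[OF M.SL] inv2_SL2Z[OF N.SL]]
    unfolding coherently_oriented_def qform_inv2 by force
qed

definition coord1 :: "real \<times> real \<Rightarrow> real \<times> real \<Rightarrow> real \<times> real \<Rightarrow> real" where
  "coord1 u v w = wedge w v / wedge u v"

definition coord2 :: "real \<times> real \<Rightarrow> real \<times> real \<Rightarrow> real \<times> real \<Rightarrow> real" where
  "coord2 u v w = wedge u w / wedge u v"

text \<open>The matrix of \<open>M\<close> in the basis \<open>u, v\<close>:
  \<open>act M u = m11 u v M *\<^sub>R u + m21 u v M *\<^sub>R v\<close> and \<open>act M v = m12 u v M *\<^sub>R u + m22 u v M *\<^sub>R v\<close>.\<close>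
definition "m11 u v M = coord1 u v (act M u)"
definition "m21 u v M = coord2 u v (act M u)"
definition "m12 u v M = coord1 u v (act M v)"
definition "m22 u v M = coord2 u v (act M v)"

lemma coord_scaleR:
  "coord1 u v (k *\<^sub>R w) = k * coord1 u v w" "coord2 u v (k *\<^sub>R w) = k * coord2 u v w"
  by (simp_all add: coord1_def coord2_def wedge_scaleR_left wedge_scaleR_right)

lemma coord_uminus:
  "coord1 u v (- w) = - coord1 u v w" "coord2 u v (- w) = - coord2 u v w"
  "coord1 u (- v) w = coord1 u v w" "coord2 u (- v) w = - coord2 u v w"
  by (simp_all add: coord1_def coord2_def wedge_uminus)

lemma m_uminus_right:
  "m11 u (- v) M = m11 u v M" "m21 u (- v) M = - m21 u v M"
  "m12 u (- v) M = - m12 u v M" "m22 u (- v) M = m22 u v M"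
  by (simp_all add: m11_def m21_def m12_def m22_def act_uminus coord_uminus)

definition posdiag_nonneg_in_basis :: "real \<times> real \<Rightarrow> real \<times> real \<Rightarrow> imat \<Rightarrow> bool" where
  "posdiag_nonneg_in_basis u v M \<longleftrightarrow>
     m11 u v M > 0 \<and> m22 u v M > 0 \<and> m12 u v M \<ge> 0 \<and> m21 u v M \<ge> 0"

context
  fixes u v :: "real \<times> real"
  assumes indep: "wedge u v \<noteq> 0"
begin

lemma coord_basis [simp]:
  "coord1 u v u = 1" "coord2 u v u = 0" "coord1 u v v = 0" "coord2 u v v = 1"
  using indep by (simp_all add: coord1_def coord2_def wedge_commute[of v u])

lemma coord1_act: "coord1 u v (act M w) = coord1 u v w * m11 u v M + coord2 u v w * m12 u v M"
proof -
  have "wedge u v * wedge (act M w) v =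
      wedge w v * wedge (act M u) v + wedge u w * wedge (act M v) v"
    by (simp add: wedge_def act_def algebra_simps)
  then show ?thesis using indep by (simp add: coord1_def coord2_def m11_def m12_def field_simps)
qed

lemma coord2_act: "coord2 u v (act M w) = coord1 u v w * m21 u v M + coord2 u v w * m22 u v M"
proof -
  have "wedge u v * wedge u (act M w) =
      wedge w v * wedge u (act M u) + wedge u w * wedge u (act M v)"
    by (simp add: wedge_def act_def algebra_simps)
  then show ?thesis using indep by (simp add: coord1_def coord2_def m21_def m22_def field_simps)
qed

lemma wedge_in_coords:
  "wedge w1 w2 = wedge u v * (coord1 u v w1 * coord2 u v w2 - coord2 u v w1 * coord1 u v w2)"
proof -
  have "wedge w1 w2 * (wedge u v * wedge u v) =
      wedge u v * (wedge w1 v * wedge u w2 - wedge u w1 * wedge w2 v)"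
    by (simp add: wedge_def algebra_simps)
  then show ?thesis using indep by (simp add: coord1_def coord2_def field_simps)
qed

lemma m_mult:
  "m11 u v (M ** N) = m11 u v M * m11 u v N + m12 u v M * m21 u v N"
  "m21 u v (M ** N) = m21 u v M * m11 u v N + m22 u v M * m21 u v N"
  "m12 u v (M ** N) = m11 u v M * m12 u v N + m12 u v M * m22 u v N"
  "m22 u v (M ** N) = m21 u v M * m12 u v N + m22 u v M * m22 u v N"
  unfolding m11_def[of u v "M ** N"] m21_def[of u v "M ** N"] m12_def[of u v "M ** N"]
    m22_def[of u v "M ** N"] act_mult coord1_act coord2_act
  by (simp_all add: m11_def m12_def m21_def m22_def algebra_simps)

lemma m_id: "m11 u v (mat 1) = 1" "m22 u v (mat 1) = 1" "m12 u v (mat 1) = 0" "m21 u v (mat 1) = 0"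
  by (simp_all add: m11_def m22_def m12_def m21_def act_id)

lemma m_trace: "m11 u v M + m22 u v M = real_of_int (trace M)"
proof -
  have "wedge (act M u) v + wedge u (act M v) = real_of_int (trace M) * wedge u v"
    by (simp add: wedge_def act_def trace_def sum_2 algebra_simps)
  then show ?thesis using indep by (simp add: m11_def m22_def coord1_def coord2_def field_simps)
qed

lemma m_det:
  assumes "M \<in> SL2Z"
  shows "m11 u v M * m22 u v M - m12 u v M * m21 u v M = 1"
proof -
  have "wedge (act M u) v * wedge u (act M v) - wedge (act M v) v * wedge u (act M u) =
      wedge (act M u) (act M v) * wedge u v"
    by (simp add: wedge_def algebra_simps)
  then have "wedge (act M u) v * wedge u (act M v) - wedge (act M v) v * wedge u (act M u) =
      (wedge u v)^2"
    by (simp add: wedge_act[OF assms] power2_eq_square)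
  then show ?thesis using indep
    by (simp add: m11_def m22_def m12_def m21_def coord1_def coord2_def field_simps
        power2_eq_square)
qed

lemma posdiag_nonneg_in_basis_mult:
  assumes "posdiag_nonneg_in_basis u v M" "posdiag_nonneg_in_basis u v N"
  shows "posdiag_nonneg_in_basis u v (M ** N)"
  using assms unfolding posdiag_nonneg_in_basis_def m_mult
  by (auto intro: add_pos_nonneg add_nonneg_pos add_nonneg_nonneg mult_nonneg_nonneg)

lemma posdiag_nonneg_in_basis_phi:
  assumes "posdiag_nonneg_in_basis u v A" "posdiag_nonneg_in_basis u v B"
  shows "posdiag_nonneg_in_basis u v (phi A B w)"
proof (induction w)
  case Nil
  then show ?case by (simp add: posdiag_nonneg_in_basis_def m_id)
next
  case (Cons c w)
  then show ?case using assms by (cases c) (auto intro: posdiag_nonneg_in_basis_mult)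
qed

end

section \<open>Comparison of traces in an eigenbasis\<close>

lemma eigenvalue_gap:
  fixes lam mu :: real
  assumes lam: "lam \<ge> 1" and mu: "mu > 1" and gap: "lam + 1/lam + 1 \<le> mu + 1/mu"
  shows "1 \<le> mu - lam" "lam + 1/lam \<le> mu"
proof -
  define k where "k = 1 - 1/(lam * mu)"
  have "lam * mu > 1" using less_1_mult'[OF mu lam] by (simp add: mult.commute)
  then have k: "0 < k" "k \<le> 1" unfolding k_def by (simp_all add: field_simps)
  have "(mu - lam) * k = (mu + 1/mu) - (lam + 1/lam)"
    unfolding k_def using lam mu by (simp add: field_simps)
  then have le: "1 \<le> (mu - lam) * k" using gap by simp
  then have "0 < (mu - lam) * k" by simp
  then have "0 < mu - lam" using k by (simp add: zero_less_mult_iff)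
  then have "(mu - lam) * k \<le> mu - lam" using k by (simp add: mult_left_le)
  then show 1: "1 \<le> mu - lam" using le by simp
  have "1/lam \<le> 1" using lam by simp
  then show "lam + 1/lam \<le> mu" using 1 by simp
qed

text \<open>In the basis \<open>u, v\<close> the matrices are \<open>A = [[lam, a], [0, 1/lam]]\<close> and
  \<open>B = [[1/mu, 0], [b, mu]]\<close> with \<open>a = m12 u v A\<close> and \<open>b = m21 u v B\<close>.\<close>
locale eigenbasis =
  fixes A B :: imat and u v :: "real \<times> real" and lam mu :: real
  assumes SL_A: "A \<in> SL2Z" and SL_B: "B \<in> SL2Z" and indep: "wedge u v \<noteq> 0"
    and eig_A: "act A u = lam *\<^sub>R u" and eig_B: "act B v = mu *\<^sub>R v"
    and lam_ge_1: "lam \<ge> 1" and mu_gt_1: "mu > 1"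
begin

lemma entries_A: "m11 u v A = lam" "m21 u v A = 0" "m22 u v A = 1 / lam"
proof -
  show "m11 u v A = lam" "m21 u v A = 0"
    by (simp_all add: m11_def m21_def eig_A coord_scaleR coord_basis[OF indep])
  then show "m22 u v A = 1 / lam"
    using m_det[OF indep SL_A] lam_ge_1 by (simp add: field_simps)
qed

lemma entries_B: "m11 u v B = 1 / mu" "m12 u v B = 0" "m22 u v B = mu"
proof -
  show "m12 u v B = 0" "m22 u v B = mu"
    by (simp_all add: m12_def m22_def eig_B coord_scaleR coord_basis[OF indep])
  then show "m11 u v B = 1 / mu"
    using m_det[OF indep SL_B] mu_gt_1 by (simp add: field_simps)
qed

lemma trace_A: "real_of_int (trace A) = lam + 1 / lam"
  using m_trace[OF indep, of A] by (simp add: entries_A)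

lemma trace_B: "real_of_int (trace B) = mu + 1 / mu"
  using m_trace[OF indep, of B] by (simp add: entries_B)

lemma trace_AB: "real_of_int (trace (A ** B)) = lam / mu + m12 u v A * m21 u v B + mu / lam"
  using m_trace[OF indep, of "A ** B"] by (simp add: m_mult[OF indep] entries_A entries_B)

lemma eigenbasis_uminus: "eigenbasis A B u (- v) lam mu"
  using SL_A SL_B indep eig_A eig_B lam_ge_1 mu_gt_1
  by unfold_locales (simp_all add: wedge_uminus act_uminus)

lemma qform_A_in_basis:
  "qform A w = - wedge u v * coord2 u v w *
     ((lam - 1/lam) * coord1 u v w + m12 u v A * coord2 u v w)"
proof -
  have "coord1 u v (act A w) = coord1 u v w * lam + coord2 u v w * m12 u v A"
    "coord2 u v (act A w) = coord2 u v w / lam"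
    by (simp_all add: coord1_act[OF indep] coord2_act[OF indep] entries_A)
  then show ?thesis
    unfolding qform_def wedge_in_coords[OF indep, of w "act A w"]
    using lam_ge_1 by (simp add: field_simps)
qed

lemma qform_B_in_basis:
  "qform B w = wedge u v * coord1 u v w *
     (m21 u v B * coord1 u v w + (mu - 1/mu) * coord2 u v w)"
proof -
  have "coord1 u v (act B w) = coord1 u v w / mu"
    "coord2 u v (act B w) = coord1 u v w * m21 u v B + coord2 u v w * mu"
    by (simp_all add: coord1_act[OF indep] coord2_act[OF indep] entries_B)
  then show ?thesis
    unfolding qform_def wedge_in_coords[OF indep, of w "act B w"]
    using mu_gt_1 by (simp add: field_simps)
qed

lemma offdiag_bound_attracting:
  assumes eig_g: "act B g = (1 / mu) *\<^sub>R g" and neg: "qform A g * qform B u < 0"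
  shows "(lam - 1/lam) * (mu - 1/mu) < m12 u v A * m21 u v B"
proof -
  define a b c1 c2 d where "a = m12 u v A" "b = m21 u v B"
    "c1 = coord1 u v g" "c2 = coord2 u v g" "d = wedge u v"
  define l m where "l = lam - 1/lam" "m = mu - 1/mu"
  have "c1 * b + c2 * mu = c2 / mu"
    using coord2_act[OF indep, of B g] by (simp add: eig_g coord_scaleR entries_B a_b_c1_c2_d_def)
  then have hm: "c2 * m = - c1 * b" using mu_gt_1 by (simp add: l_m_def field_simps)
  have QA: "qform A g = - d * c2 * (l * c1 + a * c2)" and QB: "qform B u = d * b"
    by (simp_all add: qform_A_in_basis qform_B_in_basis coord_basis[OF indep] a_b_c1_c2_d_def
        l_m_def)
  have "qform A g * qform B u * m^2 = - (d^2 * b * (c2 * m) * (c1 * l * m + (c2 * m) * a))"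
    unfolding QA QB by (simp add: power2_eq_square algebra_simps)
  also have "\<dots> = d^2 * c1^2 * b^2 * (l * m - a * b)"
    unfolding hm by (simp add: power2_eq_square algebra_simps)
  finally have eq: "qform A g * qform B u * m^2 = d^2 * c1^2 * b^2 * (l * m - a * b)" .
  have "1 / mu < 1" using mu_gt_1 by simp
  then have "m > 0" using mu_gt_1 unfolding l_m_def by linarith
  then have "qform A g * qform B u * m^2 < 0" using neg by (simp add: mult_neg_pos)
  then have "d^2 * c1^2 * b^2 * (l * m - a * b) < 0" using eq by simp
  then have "l * m - a * b < 0" by (metis mult_nonneg_nonneg not_less zero_le_power2)
  then show ?thesis by (simp add: a_b_c1_c2_d_def l_m_def)
qed

lemma offdiag_bound_repelling:
  assumes eig_u': "act A u' = (1 / lam) *\<^sub>R u'" and neg: "qform A v * qform B u' < 0"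
  shows "(lam - 1/lam) * (mu - 1/mu) < m12 u v A * m21 u v B"
proof -
  define a b e1 e2 d where "a = m12 u v A" "b = m21 u v B"
    "e1 = coord1 u v u'" "e2 = coord2 u v u'" "d = wedge u v"
  define l m where "l = lam - 1/lam" "m = mu - 1/mu"
  have "e1 * lam + e2 * a = e1 / lam"
    using coord1_act[OF indep, of A u'] by (simp add: eig_u' coord_scaleR entries_A a_b_e1_e2_d_def)
  then have hl: "e1 * l = - e2 * a" using lam_ge_1 by (simp add: l_m_def field_simps)
  have QA: "qform A v = - d * a" and QB: "qform B u' = d * e1 * (b * e1 + m * e2)"
    by (simp_all add: qform_A_in_basis qform_B_in_basis coord_basis[OF indep] a_b_e1_e2_d_def
        l_m_def)
  have prod: "qform A v * qform B u' = - (d^2 * a * e1 * (e1 * b + e2 * m))"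
    unfolding QA QB by (simp add: power2_eq_square algebra_simps)
  show ?thesis
  proof (cases "l = 0")
    case True
    then have "e2 * a = 0" using hl by simp
    moreover have "a \<noteq> 0" using neg prod by auto
    ultimately have "qform A v * qform B u' = - (d^2 * e1^2 * (a * b))"
      using prod by (simp add: power2_eq_square algebra_simps)
    then have "0 < (d^2 * e1^2) * (a * b)" using neg by simp
    moreover have "d^2 * e1^2 \<ge> 0" by simp
    ultimately have "0 < a * b" by (auto simp: zero_less_mult_iff)
    then show ?thesis using True by (simp add: a_b_e1_e2_d_def l_m_def)
  next
    case False
    have "qform A v * qform B u' * l^2 = - (d^2 * a * (e1 * l) * ((e1 * l) * b + e2 * m * l))"
      unfolding prod by (simp add: power2_eq_square algebra_simps)
    also have "\<dots> = - (d^2 * a^2 * e2^2 * (a * b - l * m))"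
      unfolding hl by (simp add: power2_eq_square algebra_simps)
    finally have eq: "qform A v * qform B u' * l^2 = - (d^2 * a^2 * e2^2 * (a * b - l * m))" .
    have "qform A v * qform B u' * l^2 < 0" using neg False by (simp add: mult_neg_pos)
    then have "0 < d^2 * a^2 * e2^2 * (a * b - l * m)" using eq by simp
    moreover have "d^2 * a^2 * e2^2 \<ge> 0" by simp
    ultimately have "0 < a * b - l * m" by (auto simp: zero_less_mult_iff)
    then show ?thesis by (simp add: a_b_e1_e2_d_def l_m_def)
  qed
qed

lemma trace_ABX_minus_trace_AAX:
  "real_of_int (trace (A ** (B ** X))) - real_of_int (trace (A ** (A ** X))) =
     (lam / mu + m12 u v A * m21 u v B - lam^2) * m11 u v X
     + m12 u v A * (mu - lam - 1 / lam) * m21 u v X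
     + (m21 u v B / lam) * m12 u v X + (mu / lam - 1 / lam^2) * m22 u v X"
  unfolding m_trace[OF indep, symmetric] m_mult[OF indep] entries_A entries_B
  using lam_ge_1 mu_gt_1 by (simp add: field_simps power2_eq_square)

lemma trace_AAX_less_ABX_if_nonneg:
  assumes a: "m12 u v A \<ge> 0" and b: "m21 u v B \<ge> 0"
    and c11: "lam / mu + m12 u v A * m21 u v B - lam^2 \<ge> 0" and c21: "lam + 1 / lam \<le> mu"
  shows "trace (A ** (A ** phi A B w)) < trace (A ** (B ** phi A B w))"
proof -
  define X where "X = phi A B w"
  have "posdiag_nonneg_in_basis u v A"
    unfolding posdiag_nonneg_in_basis_def entries_A using a lam_ge_1 by simp
  moreover have "posdiag_nonneg_in_basis u v B"
    unfolding posdiag_nonneg_in_basis_def entries_B using b mu_gt_1 by simp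
  ultimately have "posdiag_nonneg_in_basis u v X" unfolding X_def
    by (rule posdiag_nonneg_in_basis_phi[OF indep])
  then have X: "m11 u v X > 0" "m22 u v X > 0" "m12 u v X \<ge> 0" "m21 u v X \<ge> 0"
    unfolding posdiag_nonneg_in_basis_def by auto
  have "lam * mu > 1" using less_1_mult'[OF mu_gt_1 lam_ge_1] by (simp add: mult.commute)
  then have "mu / lam - 1 / lam^2 > 0" using lam_ge_1 by (simp add: field_simps power2_eq_square)
  then have "real_of_int (trace (A ** (B ** X))) - real_of_int (trace (A ** (A ** X))) > 0"
    unfolding trace_ABX_minus_trace_AAX using a b c11 c21 X lam_ge_1
    by (intro add_nonneg_pos add_nonneg_nonneg mult_nonneg_nonneg mult_pos_pos) auto
  then show ?thesis unfolding X_def by simp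
qed

lemma eigenvalue_gap_of_trace:
  assumes "trace A < trace B"
  shows "1 \<le> mu - lam" "lam + 1 / lam \<le> mu"
proof -
  have "real_of_int (trace A) + 1 \<le> real_of_int (trace B)" using assms by linarith
  then have "lam + 1/lam + 1 \<le> mu + 1/mu" using trace_A trace_B by simp
  then show "1 \<le> mu - lam" "lam + 1 / lam \<le> mu"
    using eigenvalue_gap[OF lam_ge_1 mu_gt_1] by auto
qed

text \<open>For \<open>trace A = 2\<close> the
  bound on the off-diagonal product alone is too weak; there integrality of
  \<open>trace (A ** B) - trace B = m12 u v A * m21 u v B\<close> is needed.\<close>
lemma diag_coeff_nonneg:
  assumes tr: "trace A < trace B"
    and big: "(lam - 1/lam) * (mu - 1/mu) < m12 u v A * m21 u v B"
  shows "0 \<le> lam / mu + m12 u v A * m21 u v B - lam^2"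
proof (cases "trace A \<le> 2")
  case True
  then have "lam + 1/lam \<le> 2" using trace_A by linarith
  then have "(lam - 1)^2 \<le> 0" using lam_ge_1 by (simp add: field_simps power2_eq_square)
  then have lam: "lam = 1" by simp
  have "m12 u v A * m21 u v B = real_of_int (trace (A ** B) - trace B)"
    using trace_AB trace_B lam by simp
  moreover have "0 < m12 u v A * m21 u v B" using big lam by simp
  ultimately have "1 \<le> m12 u v A * m21 u v B"
    by (metis of_int_0_less_iff of_int_1_le_iff int_one_le_iff_zero_less)
  moreover have "0 < 1 / mu" using mu_gt_1 by simp
  ultimately have "0 \<le> 1 / mu + m12 u v A * m21 u v B - 1" by linarith
  then show ?thesis using lam by simp
next
  case False
  then have "3 \<le> lam + 1/lam" using trace_A by linarith
  then have "3 * lam - 1 \<le> lam * lam" using lam_ge_1 by (simp add: field_simps)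
  then have h: "0 \<le> lam^2 - 1 - lam" using lam_ge_1 by (simp add: power2_eq_square)
  have "(lam^2 - 1) * 1 \<le> (lam^2 - 1) * (mu - lam)"
    using eigenvalue_gap_of_trace(1)[OF tr] h lam_ge_1 by (intro mult_left_mono) auto
  then have "0 \<le> lam^2 * (mu - lam) - mu" using h by (simp add: algebra_simps)
  moreover have "(lam/mu + (lam - 1/lam) * (mu - 1/mu) - lam^2) * (lam * mu) =
      mu * (lam^2 * (mu - lam) - mu) + 1"
    using lam_ge_1 mu_gt_1 by (simp add: field_simps power2_eq_square power3_eq_cube)
  ultimately have "0 < (lam/mu + (lam - 1/lam) * (mu - 1/mu) - lam^2) * (lam * mu)"
    using mu_gt_1 by (simp add: add_nonneg_pos)
  moreover have "0 < lam * mu" using lam_ge_1 mu_gt_1 by simp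
  ultimately have "0 < lam/mu + (lam - 1/lam) * (mu - 1/mu) - lam^2"
    using zero_less_mult_pos2 by blast
  then show ?thesis using big by linarith
qed

text \<open>If \<open>a, b < 0\<close>, replacing \<open>v\<close> by \<open>-v\<close> changes the signs of both.\<close>
lemma trace_AAX_less_ABX:
  assumes tr: "trace A < trace B"
    and big: "(lam - 1/lam) * (mu - 1/mu) < m12 u v A * m21 u v B"
  shows "trace (A ** (A ** phi A B w)) < trace (A ** (B ** phi A B w))"
proof -
  note diag = diag_coeff_nonneg[OF tr big] and gap = eigenvalue_gap_of_trace(2)[OF tr]
  have "1/lam \<le> lam" "1/mu \<le> mu"
    using lam_ge_1 mu_gt_1 by (simp_all add: order.trans[of _ 1])
  then have ab: "0 < m12 u v A * m21 u v B" using big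
    by (metis diff_ge_0_iff_ge mult_nonneg_nonneg le_less_trans)
  show ?thesis
  proof (cases "0 \<le> m12 u v A")
    case True
    then have "0 \<le> m21 u v B" using ab by (simp add: zero_less_mult_iff)
    with True show ?thesis using trace_AAX_less_ABX_if_nonneg diag gap by blast
  next
    case False
    interpret flipped: eigenbasis A B u "- v" lam mu by (rule eigenbasis_uminus)
    have "0 \<le> m12 u (- v) A" "0 \<le> m21 u (- v) B"
      using False ab by (auto simp: m_uminus_right zero_less_mult_iff)
    then show ?thesis
      using flipped.trace_AAX_less_ABX_if_nonneg diag gap by (simp add: m_uminus_right)
  qed
qed

end

section \<open>Words of maximal trace\<close>

lemma phi_append: "phi A B (x @ y) = phi A B x ** phi A B y"
proof (induction x)
  case (Cons c x)
  then show ?case by (cases c) (simp_all add: matrix_mul_assoc)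
qed simp

lemma wtr_rotate: "wtr A B (x @ y) = wtr A B (y @ x)"
  unfolding wtr_def phi_append by (rule trace_mul_sym)

lemma trace_AAX_less_ABX_if_not_coherently_oriented:
  assumes SL_A: "A \<in> SL2Z" and SL_B: "B \<in> SL2Z" and "A \<noteq> mat 1"
    and nc: "\<not> coherently_oriented A (inv2 B)"
    and "2 \<le> trace A" and tr: "trace A < trace B"
  shows "trace (A ** (A ** phi A B w)) < trace (A ** (B ** phi A B w))"
proof -
  have "B \<noteq> mat 1" using assms by (auto simp: trace_def sum_2 mat_def)
  then have hA: "sl2z_trace_ge_2 A" and hC: "sl2z_trace_ge_2 (inv2 B)"
    using assms sl2z_trace_ge_2_inv2 by (auto simp: sl2z_trace_ge_2_def)
  interpret A: sl2z_trace_ge_2 A by (fact hA)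
  interpret C: sl2z_trace_ge_2 "inv2 B" by (fact hC)
  define u u' g v where "u = hcoords (attr_fix A)" "u' = hcoords (rep_fix A)"
    "g = hcoords (attr_fix (inv2 B))" "v = hcoords (rep_fix (inv2 B))"
  have "C.lam \<noteq> 1" using C.trace_eq_lam tr \<open>2 \<le> trace A\<close> by auto
  then have mu: "C.lam > 1" using C.lam_ge_1 by simp
  have eig_B_v: "act B v = C.lam *\<^sub>R v" and eig_B_g: "act B g = (1 / C.lam) *\<^sub>R g"
    using act_inv2_eigenvector[OF C.SL C.act_rep_fix]
      act_inv2_eigenvector[OF C.SL C.act_attr_fix] mu
    by (simp_all add: u_u'_g_v_def)
  have key: "qform A g * qform B u < 0 \<or> qform A v * qform B u' < 0"
    using not_coherently_oriented_qform[OF hA hC nc] by (simp add: qform_inv2 u_u'_g_v_def)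
  have "wedge u v \<noteq> 0"
    using key by (intro wedge_ne_0_if_qform_ne_0[OF A.act_attr_fix[folded u_u'_g_v_def(1)] eig_B_v])
      (auto simp: hcoords_nonzero u_u'_g_v_def)
  then interpret eigenbasis A B u v A.lam C.lam
    using SL_A SL_B A.lam_ge_1 mu A.act_attr_fix eig_B_v
    by unfold_locales (simp_all add: u_u'_g_v_def)
  from key have "(A.lam - 1 / A.lam) * (C.lam - 1 / C.lam) < m12 u v A * m21 u v B"
  proof
    assume "qform A g * qform B u < 0"
    then show ?thesis by (rule offdiag_bound_attracting[OF eig_B_g])
  next
    assume "qform A v * qform B u' < 0"
    then show ?thesis by (rule offdiag_bound_repelling[OF A.act_rep_fix[folded u_u'_g_v_def(2)]])
  qed
  then show ?thesis using trace_AAX_less_ABX[OF tr] by blast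
qed

theorem lemma5p5:
  fixes A B :: "int^2^2"
  assumes "A \<in> SL2Z" and "B \<in> SL2Z"
    and "A ** B \<noteq> B ** A"
    and "well_oriented A B"
    and "2 \<le> trace A" and "trace A < trace B"
    and "n \<ge> 1"
    and "length w = n"
    and "\<forall>u. length u = n \<longrightarrow> wtr A B u \<le> wtr A B w"
  shows "\<not> has_factor [La, La] w"
proof
  assume "has_factor [La, La] w"
  then obtain p q where w: "w = p @ [La, La] @ q" unfolding has_factor_def by blast
  define w' where "w' = [La, Lb] @ q @ p"
  have "A \<noteq> mat 1" using assms(3) by auto
  have "wtr A B w = wtr A B ([La, La] @ q @ p)"
    using wtr_rotate[of A B p "[La, La] @ q"] by (simp add: w)
  also have "\<dots> < wtr A B w'"
    using trace_AAX_less_ABX_if_not_coherently_oriented[OF assms(1,2) \<open>A \<noteq> mat 1\<close> _ assms(5,6)]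
      assms(4)
    by (simp add: w'_def wtr_def well_oriented_def)
  finally have "wtr A B w < wtr A B w'" .
  moreover have "length w' = n" using assms(8) by (simp add: w w'_def)
  ultimately show False using assms(9) by force
qed

end
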